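(* For every integer $n\geq 4$, the lexicographically smallest highly bispecial binary word of length $n$ is $001^{n-3}0$, except for $n=6$, for which the lexicographically smallest highly bispecial binary word of length $6$ is $001011$.
   Context: Words are over the binary alphabet $\{0,1\}$; the lexicographic order on words of the same length is induced by $0<1$. A factor of a word $u$ is any (possibly empty) contiguous block of $u$. A factor $x$ of $u$ is left special if both $0x$ and $1x$ are factors of $u$, right special if both $x0$ and $x1$ are factors of $u$, and bispecial if it is both left and right special (the empty word may be bispecial). A binary word of length $n$ is highly bispecial if its number of distinct bispecial factors is maximum among all binary words of length $n$. *)

theory Defs
  imports Main
begin

text \<open>Binary words are lists of booleans, with False standing for the letter 0
  and True for the letter 1.\<close>

type_synonym word = "bool list"

definition is_factor :: "word \<Rightarrow> word \<Rightarrow> bool" where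
  "is_factor x u \<longleftrightarrow> (\<exists>p s. u = p @ x @ s)"

definition left_special :: "word \<Rightarrow> word \<Rightarrow> bool" where
  "left_special u x \<longleftrightarrow> is_factor (False # x) u \<and> is_factor (True # x) u"

definition right_special :: "word \<Rightarrow> word \<Rightarrow> bool" where
  "right_special u x \<longleftrightarrow> is_factor (x @ [False]) u \<and> is_factor (x @ [True]) u"

definition bispecial :: "word \<Rightarrow> word \<Rightarrow> bool" where
  "bispecial u x \<longleftrightarrow> is_factor x u \<and> left_special u x \<and> right_special u x"

definition num_bispecial :: "word \<Rightarrow> nat" where
  "num_bispecial u = card {x. bispecial u x}"

definition highly_bispecial :: "word \<Rightarrow> bool" where
  "highly_bispecial u \<longleftrightarrow>
     (\<forall>v. length v = length u \<longrightarrow> num_bispecial v \<le> num_bispecial u)"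

definition lex_less :: "word \<Rightarrow> word \<Rightarrow> bool" where
  "lex_less u v \<longleftrightarrow> (u, v) \<in> lexord {(a, b). a < b}"

definition lex_smallest_hb :: "nat \<Rightarrow> word \<Rightarrow> bool" where
  "lex_smallest_hb n w \<longleftrightarrow> length w = n \<and> highly_bispecial w \<and>
     (\<forall>v. length v = n \<and> highly_bispecial v \<and> v \<noteq> w \<longrightarrow> lex_less w v)"

end

(*
  If a suffix s of u also occurs elsewhere in u, then u has fewer than |u| - |s| right special
  factors: appending a letter a to u creates as new right special factors only suffixes x of u
  which occur twice in u while x a does not occur in u, and these have different lengths between
  |s| and the length of the longest repeated suffix of u, so induction along u applies.
  Dually for repeated prefixes and left special factors.

  A binary word of length n >= 3 repeats its first or its last letter, hence has at most n - 2
  bispecial factors; 001^(n-3)0 (with bispecial factors 0 and 1^i, i < n - 3) and 001011 attain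
  this. A word of length n lexicographically below 001^(n-3)0 has the form 001^k0r with r
  nonempty. Unless it is 001011, it repeats its prefix 00, or it repeats its suffix of length 2,
  or it starts with 0010101 without repeating 00, so that 010 is left special but not right
  special. Each case costs one more bispecial factor, leaving at most n - 3.
*)
theory Submission
  imports Defs "HOL-Library.Sublist"
begin

section \<open>Special factors and repeated suffixes and prefixes\<close>

definition right_specials :: "word \<Rightarrow> word set" where
  "right_specials u = {x. right_special u x}"

definition left_specials :: "word \<Rightarrow> word set" where
  "left_specials u = {x. left_special u x}"

definition bispecials :: "word \<Rightarrow> word set" where
  "bispecials u = {x. bispecial u x}"

lemma is_factor_iff_sublist [simp]: "is_factor x u \<longleftrightarrow> sublist x u"
  by (simp add: is_factor_def sublist_def)

lemma finite_right_specials: "finite (right_specials u)"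
proof (rule finite_subset)
  show "right_specials u \<subseteq> set (sublists u)"
    by (auto simp: right_specials_def right_special_def
        intro: sublist_order.order_trans[OF sublist_append_rightI])
qed simp

lemma inj_on_length_suffixes: "inj_on length {x. suffix x u}"
  by (rule inj_onI) (metis mem_Collect_eq order.refl suffix_length_suffix suffix_order.antisym)

lemma sublist_snoc_imp_sublist_butlast: "sublist (x @ [b]) u \<Longrightarrow> sublist x (butlast u)"
proof -
  assume "sublist (x @ [b]) u"
  then obtain p q where "u = p @ x @ b # q" by (auto simp: sublist_def)
  then have "butlast u = p @ x @ butlast (b # q)" by (simp add: butlast_append)
  then show ?thesis by (metis sublist_appendI)
qed

lemma right_special_snoc_newD:
  assumes "right_special (u @ [a]) x" "\<not> right_special u x"
  shows "suffix x u" "sublist x (butlast u)" "\<not> sublist (x @ [a]) u"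
proof -
  obtain c where c: "\<not> sublist (x @ [c]) u"
    using assms(2) unfolding right_special_def by auto
  have "sublist (x @ [c]) (u @ [a])" "sublist (x @ [\<not> c]) (u @ [a])"
    using assms(1) unfolding right_special_def by (cases c; simp)+
  with c have "suffix (x @ [c]) (u @ [a])" and nc: "sublist (x @ [\<not> c]) u"
    by (auto simp: sublist_snoc)
  then have "c = a" "suffix x u" by auto
  with c nc show "suffix x u" "sublist x (butlast u)" "\<not> sublist (x @ [a]) u"
    by (auto intro: sublist_snoc_imp_sublist_butlast)
qed

lemma right_specials_singleton: "right_specials [a] = {}"
  by (auto simp: right_specials_def right_special_def sublist_Cons_right prefix_def
      append_eq_Cons_conv)

lemma right_specials_snoc_subset:
  assumes "suffix s (u @ [a])" "sublist s u"
  shows "right_specials (u @ [a]) \<subseteq>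
    right_specials u \<union> {x. suffix x u \<and> sublist x (butlast u) \<and> length s \<le> length x}"
proof
  fix x assume x: "x \<in> right_specials (u @ [a])"
  show "x \<in> right_specials u \<union> {x. suffix x u \<and> sublist x (butlast u) \<and> length s \<le> length x}"
  proof (cases "right_special u x")
    case False
    with x have new: "suffix x u" "sublist x (butlast u)" "\<not> sublist (x @ [a]) u"
      using right_special_snoc_newD[of u a x] by (auto simp: right_specials_def)
    have "length s \<le> length x"
    proof (rule ccontr)
      assume short: "\<not> length s \<le> length x"
      then obtain s' where "s = s' @ [a]" "suffix s' u"
        using assms(1) by auto
      with short new(1) have "suffix (x @ [a]) s"
        by (auto intro: suffix_length_suffix)
      with assms(2) new(3) show False
        by (auto intro: sublist_order.order_trans)
    qed
    with new show ?thesis by simp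
  qed (simp add: right_specials_def)
qed

lemma card_suffixes_length_between:
  "card {x. suffix x u \<and> i \<le> length x \<and> length x \<le> j} \<le> Suc j - i"
proof -
  have "card {x. suffix x u \<and> i \<le> length x \<and> length x \<le> j} \<le> card {i..j}"
    by (rule card_inj_on_le[of length]) (auto intro: inj_on_subset[OF inj_on_length_suffixes])
  then show ?thesis by simp
qed

lemma card_right_specials_less:
  assumes "u \<noteq> []" "suffix s u" "sublist s (butlast u)"
  shows "card (right_specials u) + length s < length u"
  using assms
proof (induction u arbitrary: s rule: rev_induct)
  case Nil
  then show ?case by simp
next
  case (snoc a u)
  show ?case
  proof (cases "u = []")
    case True
    with snoc.prems show ?thesis by (simp add: right_specials_singleton)
  next
    case False
    let ?repeated = "\<lambda>t. suffix t u \<and> sublist t (butlast u)"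
    have "\<exists>t. ?repeated t \<and> (\<forall>x. ?repeated x \<longrightarrow> length x \<le> length t)"
      by (rule ex_has_greatest_nat[of ?repeated "[]" length "Suc (length u)"])
        (simp_all add: less_Suc_eq_le suffix_length_le)
    then obtain t where t: "?repeated t" and longest: "\<And>x. ?repeated x \<Longrightarrow> length x \<le> length t"
      by blast
    have IH: "card (right_specials u) + length t < length u"
      using snoc.IH False t by blast
    have s_le: "length s \<le> Suc (length t)"
    proof (cases s rule: rev_cases)
      case (snoc s' b)
      with snoc.prems have "?repeated s'"
        by (auto intro: sublist_snoc_imp_sublist_butlast)
      with snoc longest show ?thesis by fastforce
    qed simp
    let ?new = "{x. suffix x u \<and> length s \<le> length x \<and> length x \<le> length t}"
    have "right_specials (u @ [a]) \<subseteq> right_specials u \<union> ?new"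
      using right_specials_snoc_subset[of s u a] snoc.prems longest by auto
    then have "card (right_specials (u @ [a])) \<le> card (right_specials u \<union> ?new)"
      by (intro card_mono) (auto intro: finite_right_specials finite_subset[of _ "set (suffixes u)"])
    also have "\<dots> \<le> card (right_specials u) + card ?new"
      by (rule card_Un_le)
    also have "card ?new \<le> Suc (length t) - length s"
      by (rule card_suffixes_length_between)
    finally show ?thesis using IH s_le by simp
  qed
qed

lemma left_special_iff_right_special_rev: "left_special u x \<longleftrightarrow> right_special (rev u) (rev x)"
  unfolding left_special_def right_special_def
  by (metis is_factor_iff_sublist rev.simps(2) sublist_rev)

lemma left_specials_eq_rev_image: "left_specials u = rev ` right_specials (rev u)"
  by (force simp: left_specials_def right_specials_def left_special_iff_right_special_rev
      image_iff)

lemma finite_left_specials: "finite (left_specials u)"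
  by (simp add: left_specials_eq_rev_image finite_right_specials)

lemma card_left_specials_less:
  assumes "u \<noteq> []" "prefix p u" "sublist p (tl u)"
  shows "card (left_specials u) + length p < length u"
proof -
  have "butlast (rev u) = rev (tl u)"
    by (cases u) auto
  with assms have "card (right_specials (rev u)) + length (rev p) < length (rev u)"
    by (intro card_right_specials_less) (auto simp: suffix_to_prefix)
  then show ?thesis
    by (simp add: left_specials_eq_rev_image card_image)
qed

lemma num_bispecial_eq_card: "num_bispecial u = card (bispecials u)"
  by (simp add: num_bispecial_def bispecials_def)

lemma bispecials_subset_right_specials: "bispecials u \<subseteq> right_specials u"
  by (auto simp: bispecials_def right_specials_def bispecial_def)

lemma bispecials_subset_left_specials: "bispecials u \<subseteq> left_specials u"
  by (auto simp: bispecials_def left_specials_def bispecial_def)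

lemma finite_bispecials: "finite (bispecials u)"
  using bispecials_subset_right_specials finite_right_specials by (rule finite_subset)

lemma num_bispecial_less_of_repeated_suffix:
  "u \<noteq> [] \<Longrightarrow> suffix s u \<Longrightarrow> sublist s (butlast u) \<Longrightarrow> num_bispecial u + length s < length u"
  using card_right_specials_less[of u s]
    card_mono[OF finite_right_specials bispecials_subset_right_specials, of u]
  by (simp add: num_bispecial_eq_card)

lemma num_bispecial_less_of_repeated_prefix:
  "u \<noteq> [] \<Longrightarrow> prefix p u \<Longrightarrow> sublist p (tl u) \<Longrightarrow> num_bispecial u + length p < length u"
  using card_left_specials_less[of u p]
    card_mono[OF finite_left_specials bispecials_subset_left_specials, of u]
  by (simp add: num_bispecial_eq_card)

lemma sublist_singleton_iff: "sublist [c] u \<longleftrightarrow> c \<in> set u"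
  by (metis in_set_conv_decomp sublist_def append_Cons append_Nil)

lemma hd_in_tl_or_last_in_butlast:
  assumes "3 \<le> length (u :: word)"
  shows "hd u \<in> set (tl u) \<or> last u \<in> set (butlast u)"
proof -
  obtain a c w where u: "u = a # c # w" and "w \<noteq> []"
    using assms by (auto simp: numeral_eq_Suc Suc_le_length_iff)
  then have "a \<in> set (butlast u)" "c \<in> set (butlast u)" "c \<in> set (tl u)"
    by auto
  then show ?thesis
    by (cases a; cases c; cases "last u") (auto simp: u)
qed

lemma num_bispecial_add_2_le:
  assumes "3 \<le> length u"
  shows "num_bispecial u + 2 \<le> length u"
proof -
  have "u \<noteq> []" using assms by auto
  from hd_in_tl_or_last_in_butlast[OF assms] show ?thesis
  proof
    assume "hd u \<in> set (tl u)"
    with \<open>u \<noteq> []\<close> show ?thesis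
      using num_bispecial_less_of_repeated_prefix[of u "[hd u]"]
      by (cases u) (auto simp: sublist_singleton_iff)
  next
    assume "last u \<in> set (butlast u)"
    moreover have "suffix [last u] u"
      using \<open>u \<noteq> []\<close> by (metis append_butlast_last_id suffixI)
    ultimately show ?thesis
      using \<open>u \<noteq> []\<close> num_bispecial_less_of_repeated_suffix[of u "[last u]"]
      by (simp add: sublist_singleton_iff)
  qed
qed

lemma num_bispecial_less_card_left_specials:
  assumes "left_special u x" "\<not> right_special u x"
  shows "num_bispecial u < card (left_specials u)"
proof -
  have "bispecials u \<subset> left_specials u"
    using assms bispecials_subset_left_specials
    by (auto simp: bispecials_def left_specials_def bispecial_def)
  then show ?thesis
    by (simp add: num_bispecial_eq_card psubset_card_mono finite_left_specials)
qed

section \<open>Bispecial factors of the words 001^k0r\<close>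

lemma sublist_of_eq_append: "u = p @ x @ q \<Longrightarrow> sublist x u"
  by auto

lemma bispecial_00_1m_0_replicate:
  assumes "i < m"
  shows "bispecial ([False, False] @ replicate m True @ [False]) (replicate i True)"
proof -
  obtain j where m: "m = Suc i + j"
    using less_imp_Suc_add[OF assms] by auto
  let ?w = "[False, False] @ replicate m True @ [False]"
  have "sublist (False # replicate i True) ?w"
    by (rule sublist_of_eq_append[of _ "[False]" _ "True # replicate j True @ [False]"])
      (simp add: m replicate_add replicate_app_Cons_same)
  moreover have "sublist (True # replicate i True) ?w"
    by (rule sublist_of_eq_append[of _ "[False, False]" _ "replicate j True @ [False]"])
      (simp add: m replicate_add)
  moreover have "sublist (replicate i True @ [False]) ?w"
    by (rule sublist_of_eq_append[of _ "False # False # replicate (Suc j) True" _ "[]"])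
      (simp add: m add.commute flip: replicate_add)
  ultimately show ?thesis
    unfolding bispecial_def left_special_def right_special_def
    by (simp add: replicate_append_same)
      (meson sublist_append_rightI sublist_order.order_trans)
qed

lemma num_bispecial_00_1m_0_ge:
  assumes "1 \<le> m"
  shows "m + 1 \<le> num_bispecial ([False, False] @ replicate m True @ [False])"
proof -
  let ?w = "[False, False] @ replicate m True @ [False]"
  obtain m' where m: "m = Suc m'"
    using assms by (cases m) auto
  have "sublist [True, False] ?w"
    by (rule sublist_of_eq_append[of _ "False # False # replicate m' True" _ "[]"])
      (simp add: m flip: replicate_append_same)
  then have "bispecial ?w [False]"
    by (simp add: m bispecial_def left_special_def right_special_def sublist_Cons_right)
  then have "insert [False] ((\<lambda>i. replicate i True) ` {..<m}) \<subseteq> bispecials ?w"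
    using bispecial_00_1m_0_replicate[of _ m] by (auto simp: bispecials_def)
  moreover have "card (insert [False] ((\<lambda>i. replicate i True) ` {..<m})) = m + 1"
    by (subst card_insert_disjoint) (auto simp: card_image inj_on_def Cons_replicate_eq)
  ultimately show ?thesis
    by (metis card_mono finite_bispecials num_bispecial_eq_card)
qed

lemma num_bispecial_001011_ge: "4 \<le> num_bispecial [False, False, True, False, True, True]"
proof -
  have "{[], [False], [True], [False, True]} \<subseteq> bispecials [False, False, True, False, True, True]"
    by (simp add: bispecials_def bispecial_def left_special_def right_special_def
        sublist_Cons_right)
  from card_mono[OF finite_bispecials this] show ?thesis
    by (simp add: num_bispecial_eq_card)
qed

lemma num_bispecial_prefix_0010101_le:
  assumes "prefix [False, False, True, False, True, False, True] v"
    and "\<not> sublist [False, False] (tl v)"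
  shows "num_bispecial v + 3 \<le> length v"
proof -
  obtain q where v: "v = [False, False, True, False, True, False, True] @ q"
    using assms(1) by (auto simp: prefix_def)
  have "left_special v [False, True, False]"
    by (simp add: v left_special_def sublist_Cons_right)
  moreover have "\<not> right_special v [False, True, False]"
  proof
    assume "right_special v [False, True, False]"
    then obtain p s where "v = p @ [False, True, False, False] @ s"
      by (auto simp: right_special_def sublist_def)
    then have "tl v = tl (p @ [False, True]) @ [False, False] @ s"
      by (simp add: tl_append2[symmetric])
    with assms(2) show False
      by (metis sublist_of_eq_append)
  qed
  ultimately have "num_bispecial v < card (left_specials v)"
    by (rule num_bispecial_less_card_left_specials)
  moreover have "card (left_specials v) + 1 < length v"
    using card_left_specials_less[of v "[False]"] by (simp add: v sublist_Cons_right)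
  ultimately show ?thesis by simp
qed

lemma word_00_1k_0_without_00E:
  assumes v: "v = [False, False] @ replicate k True @ False # r" and "r \<noteq> []"
    and "\<not> sublist [False, False] (tl v)"
  obtains k' r' where "v = [False, False, True] @ replicate k' True @ [False, True] @ r'"
proof -
  obtain k' where k: "k = Suc k'"
    using assms(3) by (cases k) (auto simp: v sublist_Cons_right)
  obtain c r' where r: "r = c # r'"
    using \<open>r \<noteq> []\<close> by (cases r) auto
  have "tl v = (False # replicate k True) @ [False, c] @ r'"
    by (simp add: v r)
  with assms(3) have "c = True"
    by (metis sublist_of_eq_append)
  with k r show thesis
    by (intro that[of k' r']) (simp add: v replicate_app_Cons_same)
qed

lemma sublist_length2_001_1k_01:
  assumes "length s = 2" and "s \<noteq> [True, True] \<or> k \<noteq> 0"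
  shows "sublist s ([False, False, True] @ replicate k True @ [False, True])"
proof -
  let ?P = "[False, False, True] @ replicate k True @ [False, True]"
  have "sublist [False, False] ?P" "sublist [False, True] ?P"
    by (simp_all add: sublist_Cons_right)
  moreover have "sublist [True, False] ?P"
    by (rule sublist_of_eq_append[of _ "False # False # replicate k True" _ "[True]"])
      (simp add: replicate_app_Cons_same)
  moreover have "sublist [True, True] ?P" if "k \<noteq> 0"
  proof -
    obtain j where "k = Suc j"
      using \<open>k \<noteq> 0\<close> not0_implies_Suc by blast
    then show ?thesis
      by (intro sublist_of_eq_append[of _ "False # False # replicate j True" _ "[False, True]"])
        (simp add: replicate_app_Cons_same)
  qed
  moreover obtain a b where "s = [a, b]"
    using assms(1) by (auto simp: numeral_2_eq_2 length_Suc_conv)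
  ultimately show ?thesis
    using assms(2) by (cases a; cases b) auto
qed

lemma repeated_11_00101_append:
  assumes v: "v = [False, False, True, False, True, c] @ q" and "suffix [True, True] v"
    and "\<not> sublist [False, False] (tl v)"
    and "\<not> prefix [False, False, True, False, True, False, True] v"
    and "v \<noteq> [False, False, True, False, True, True]"
  shows "sublist [True, True] (butlast v)"
proof (cases c)
  case True
  with assms(5) v have "q \<noteq> []" by auto
  with v True show ?thesis
    by (simp add: butlast_append sublist_Cons_right)
next
  case False
  show ?thesis
  proof (cases q)
    case Nil
    with v False assms(2) show ?thesis
      by (simp add: suffix_to_prefix)
  next
    case (Cons d q')
    with v False assms(3,4) show ?thesis
      by (cases d) (auto simp: sublist_Cons_right)
  qed
qed

lemma repeated_suffix_00_1k_0_append:
  assumes v: "v = [False, False] @ replicate k True @ False # r" and "r \<noteq> []"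
    and no_00: "\<not> sublist [False, False] (tl v)"
    and "\<not> prefix [False, False, True, False, True, False, True] v"
    and "v \<noteq> [False, False, True, False, True, True]"
  obtains s where "length s = 2" "suffix s v" "sublist s (butlast v)"
proof -
  obtain k' r' where v': "v = [False, False, True] @ replicate k' True @ [False, True] @ r'"
    using assms(1-3) by (rule word_00_1k_0_without_00E)
  define s where "s = drop (length v - 2) v"
  have s: "length s = 2" "suffix s v"
    unfolding s_def by (simp add: v') (rule suffix_drop)
  show thesis
  proof (cases "r' = []")
    case True
    have "sublist [False, True] (butlast v)"
      by (simp add: v' True butlast_append sublist_Cons_right)
    moreover have "suffix [False, True] v"
      by (simp add: v' True suffix_def)
    ultimately show thesis
      using that[of "[False, True]"] by simp
  next
    case False
    then have "sublist ([False, False, True] @ replicate k' True @ [False, True]) (butlast v)"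
      by (simp add: v' butlast_append)
    with sublist_length2_001_1k_01[OF s(1)]
    have repeated: "sublist s (butlast v)" if "s \<noteq> [True, True] \<or> k' \<noteq> 0"
      using that by (blast intro: sublist_order.order_trans)
    show thesis
    proof (cases "sublist s (butlast v)")
      case True
      with s that show thesis by blast
    next
      case not_repeated: False
      with repeated have "s = [True, True]" "k' = 0" by auto
      from \<open>r' \<noteq> []\<close> obtain c q where "r' = c # q" by (cases r') auto
      with \<open>k' = 0\<close> have "v = [False, False, True, False, True, c] @ q"
        by (simp add: v')
      moreover have "suffix [True, True] v"
        using s(2) \<open>s = [True, True]\<close> by simp
      ultimately have "sublist [True, True] (butlast v)"
        using assms(3-5) by (rule repeated_11_00101_append)
      with not_repeated \<open>s = [True, True]\<close> show thesis by simp
    qed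
  qed
qed

lemma num_bispecial_00_1k_0_append_le:
  assumes v: "v = [False, False] @ replicate k True @ False # r" and "r \<noteq> []"
    and "v \<noteq> [False, False, True, False, True, True]"
  shows "num_bispecial v + 3 \<le> length v"
proof -
  have "v \<noteq> []" by (simp add: v)
  consider "sublist [False, False] (tl v)"
    | "\<not> sublist [False, False] (tl v)" "prefix [False, False, True, False, True, False, True] v"
    | "\<not> sublist [False, False] (tl v)" "\<not> prefix [False, False, True, False, True, False, True] v"
    by blast
  then show ?thesis
  proof cases
    case 1
    with \<open>v \<noteq> []\<close> show ?thesis
      using num_bispecial_less_of_repeated_prefix[of v "[False, False]"] by (simp add: v)
  next
    case 2
    then show ?thesis by (intro num_bispecial_prefix_0010101_le)
  next
    case 3
    with assms obtain s where "length s = 2" "suffix s v" "sublist s (butlast v)"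
      by (elim repeated_suffix_00_1k_0_append)
    with \<open>v \<noteq> []\<close> show ?thesis
      using num_bispecial_less_of_repeated_suffix[of v s] by simp
  qed
qed

section \<open>Lexicographically smaller words\<close>

lemma lex_less_irrefl: "\<not> lex_less v v"
  by (simp add: lex_less_def lexord_irreflexive)

lemma lex_less_trans: "lex_less u v \<Longrightarrow> lex_less v w \<Longrightarrow> lex_less u w"
  unfolding lex_less_def by (rule lexord_trans) (auto simp: trans_def)

lemma lex_less_linear: "v \<noteq> w \<Longrightarrow> lex_less v w \<or> lex_less w v"
  using lexord_linear[of "{(a, b). a < b}" v w] by (auto simp: lex_less_def)

lemma lex_less_same_lengthE:
  assumes "lex_less v w" "length v = length w"
  obtains u r1 r2 where "v = u @ False # r1" "w = u @ True # r2"
proof -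
  from assms have "(v, w) \<in> lex {(a, b). a < b}"
    by (simp add: lex_less_def lexord_lex)
  then show thesis
    using that by (auto simp: lex_conv)
qed

lemma lex_less_00_1m_0E:
  assumes "lex_less v ([False, False] @ replicate m True @ [False])" "length v = m + 3"
  obtains k r where "v = [False, False] @ replicate k True @ False # r" "r \<noteq> []"
proof -
  let ?w = "[False, False] @ replicate m True @ [False]"
  obtain u r1 r2 where v: "v = u @ False # r1" and w: "?w = u @ True # r2"
    using assms by (elim lex_less_same_lengthE) simp
  define i where "i = length u"
  have "?w ! i"
    using w by (simp add: i_def nth_append)
  then have "i \<notin> {0, 1, m + 2}"
    by (auto simp: nth_append nth_Cons' split: if_splits)
  moreover have "i < m + 3"
    using arg_cong[OF w, of length] by (simp add: i_def)
  ultimately have "2 \<le> i" "i < m + 2"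
    by auto
  then obtain j where i: "i = Suc (Suc j)" "j < m"
    by (metis add_2_eq_Suc' add_less_cancel_right le_add_diff_inverse2)
  have "u = take i ?w"
    using w by (simp add: i_def)
  also have "\<dots> = [False, False] @ replicate j True"
    using i by simp
  finally have "v = [False, False] @ replicate j True @ False # r1"
    by (simp add: v)
  moreover have "r1 \<noteq> []"
    using assms(2) i by (auto simp: v i_def)
  ultimately show thesis by (rule that)
qed

lemma num_bispecial_lex_less_00_1m_0_le:
  assumes "lex_less v ([False, False] @ replicate m True @ [False])" "length v = m + 3"
    and "v \<noteq> [False, False, True, False, True, True]"
  shows "num_bispecial v + 3 \<le> length v"
proof -
  from assms(1,2) obtain k r where "v = [False, False] @ replicate k True @ False # r" "r \<noteq> []"
    by (elim lex_less_00_1m_0E)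
  then show ?thesis
    using assms(3) by (rule num_bispecial_00_1k_0_append_le)
qed

lemma num_bispecial_lex_less_001011_le:
  assumes "lex_less v [False, False, True, False, True, True]" "length v = 6"
  shows "num_bispecial v + 3 \<le> 6"
proof -
  have "lex_less [False, False, True, False, True, True] ([False, False] @ replicate 3 True @ [False])"
    by (simp add: lex_less_def numeral_eq_Suc)
  from assms(1) this have "lex_less v ([False, False] @ replicate 3 True @ [False])"
    by (rule lex_less_trans)
  with assms show ?thesis
    using num_bispecial_lex_less_00_1m_0_le[of v 3] lex_less_irrefl by fastforce
qed

lemma lex_smallest_hbI:
  assumes "length w = n"
    and "\<And>v. length v = n \<Longrightarrow> num_bispecial v \<le> num_bispecial w"
    and "\<And>v. length v = n \<Longrightarrow> lex_less v w \<Longrightarrow> num_bispecial v < num_bispecial w"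
  shows "lex_smallest_hb n w"
proof -
  have "lex_less w v \<or> lex_less v w" if "v \<noteq> w" for v
    using that lex_less_linear by blast
  with assms show ?thesis
    unfolding lex_smallest_hb_def highly_bispecial_def by (metis leD)
qed

theorem mainTheorem4:
  fixes n :: nat
  assumes "n \<ge> 4"
  shows "lex_smallest_hb n
           (if n = 6 then [False, False, True, False, True, True]
            else [False, False] @ replicate (n - 3) True @ [False])"
proof -
  let ?u = "[False, False, True, False, True, True]"
  let ?t = "[False, False] @ replicate (n - 3) True @ [False]"
  define w where "w = (if n = 6 then ?u else ?t)"
  have upper: "num_bispecial v + 2 \<le> n" if "length v = n" for v
    using num_bispecial_add_2_le[of v] that assms by simp
  have "n - 3 + 1 \<le> num_bispecial ?t"
    using assms by (intro num_bispecial_00_1m_0_ge) simp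
  with assms num_bispecial_001011_ge have attained: "n \<le> num_bispecial w + 2"
    by (auto simp: w_def)
  have below: "num_bispecial v + 3 \<le> n" if "length v = n" "lex_less v w" for v
  proof (cases "n = 6")
    case True
    with that show ?thesis
      using num_bispecial_lex_less_001011_le[of v] by (simp add: w_def)
  next
    case False
    with that have "v \<noteq> ?u" by auto
    with False that assms show ?thesis
      using num_bispecial_lex_less_00_1m_0_le[of v "n - 3"] by (simp add: w_def)
  qed
  have "length w = n"
    using assms by (auto simp: w_def)
  then show ?thesis
    unfolding w_def[symmetric]
    by (rule lex_smallest_hbI) (use upper attained below in fastforce)+
qed

end
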